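(* Let $q\in\mathbb{R}[x,y]$ be a positive definite quadratic form. For every psd form $f\in\mathbb{R}[x,y]$ of degree $2d$ there exist forms $\xi,\eta\in\mathbb{R}[x,y]$ with $\deg(\xi)=d-1$, $\deg(\eta)=d$ and $f=\eta^2+q\xi^2$. The number of such pairs $(\xi,\eta)$ is at most $2^{d+1}$, with equality if and only if $q\nmid f$ and $f$ is square-free.
   Context: A form is a homogeneous polynomial; a form of degree $d$ is a homogeneous polynomial of degree $d$ (possibly zero). A real binary form is psd if it takes only nonnegative values on $\mathbb{R}^2$, positive definite if it takes positive values on $\mathbb{R}^2\setminus\{0\}$. *)

theory Defs
  imports "HOL-Computational_Algebra.Computational_Algebra"
begin

text \<open>Bivariate real polynomials R[x,y] are represented as R[x][y], i.e. the type
  real poly poly: the outer variable is y, the inner one is x.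
  A polynomial p is sum over j of (coeff p j)(x) * y^j.\<close>

type_synonym bipoly = "real poly poly"

definition eval2 :: "bipoly \<Rightarrow> real \<Rightarrow> real \<Rightarrow> real" where
  "eval2 p x y = poly (map_poly (\<lambda>c. poly c x) p) y"

definition is_form :: "nat \<Rightarrow> bipoly \<Rightarrow> bool" where
  "is_form d p \<longleftrightarrow> (\<forall>i j. coeff (coeff p j) i \<noteq> 0 \<longrightarrow> i + j = d)"

definition psd2 :: "bipoly \<Rightarrow> bool" where
  "psd2 p \<longleftrightarrow> (\<forall>x y. eval2 p x y \<ge> 0)"

definition pos_def2 :: "bipoly \<Rightarrow> bool" where
  "pos_def2 p \<longleftrightarrow> (\<forall>x y. (x, y) \<noteq> (0, 0) \<longrightarrow> eval2 p x y > 0)"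

end

theory Submission
  imports Defs
begin

text \<open>Setting \<open>x = 1\<close> identifies forms of degree \<open>n\<close> with univariate polynomials of degree at
  most \<open>n\<close>, so it suffices to count the pairs \<open>(a, b)\<close> with \<open>p = b\<^sup>2 + Q a\<^sup>2\<close> for a nonnegative
  univariate \<open>p\<close> and a positive definite quadratic \<open>Q\<close>. Such pairs are the norms of elements
  \<open>b + a \<surd>(-Q)\<close>, so they are multiplicative, and every positive definite quadratic \<open>g\<close> is itself a
  norm \<open>b\<^sub>0\<^sup>2 + Q a\<^sub>0\<^sup>2\<close> with constant \<open>a\<^sub>0 \<noteq> 0\<close> (intermediate value theorem). A nonnegative \<open>p\<close>
  factors into squares of linear factors and positive definite quadratics. Dividing off a square
  \<open>l\<^sup>2\<close> or a factor \<open>Q\<close> does not change the number of representations, while dividing off another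
  quadratic \<open>g\<close> (a prime) recovers every representation of \<open>p\<close> from one of \<open>p / g\<close> by multiplying
  with \<open>b\<^sub>0 \<plusminus> a\<^sub>0 \<surd>(-Q)\<close>; the two families are disjoint exactly when \<open>g\<close> does not divide \<open>p / g\<close>.
  Hence the count at most doubles with each quadratic factor, and it reaches \<open>2\<^bsup>d+1\<^esup>\<close> exactly for
  square-free \<open>p\<close> of full degree prime to \<open>Q\<close>.\<close>

lemma map_poly_add_hom:
  assumes "\<And>x y. h (x + y) = h x + h y" "h 0 = 0"
  shows "map_poly h (p + q) = map_poly h p + map_poly h q"
  by (rule poly_eqI) (simp add: coeff_map_poly assms)

lemma map_poly_mult_hom:
  assumes "\<And>x y. h (x + y) = h x + h y" "\<And>x y. h (x * y) = h x * h y" "h 0 = 0"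
  shows "map_poly h (p * q) = map_poly h p * map_poly h q"
  by (rule poly_eqI) (simp add: coeff_map_poly coeff_mult assms sum_comp_morphism[of h, symmetric] o_def)

lemma poly_map_poly_of_real: "poly (map_poly of_real p) (complex_of_real x) = of_real (poly p x)"
  by (induction p) (auto simp: map_poly_pCons)

lemma degree_le_1_poly_eq: "degree r \<le> 1 \<Longrightarrow> r = [:coeff r 0, coeff r 1:]"
  by (rule poly_eqI) (auto simp: coeff_pCons coeff_eq_0 split: nat.split)

lemma degree_add_lead_coeff_nonneg:
  fixes u v :: "real poly"
  assumes "lead_coeff u \<ge> 0" and "lead_coeff v \<ge> 0"
  shows "degree (u + v) = max (degree u) (degree v)"
proof (cases "degree u = degree v")
  case True
  show ?thesis
  proof (cases "u = 0 \<and> v = 0")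
    case False
    hence "lead_coeff u + lead_coeff v > 0" using assms by (smt (verit) leading_coeff_0_iff)
    hence "coeff (u + v) (degree u) \<noteq> 0" using True by simp
    hence "degree u \<le> degree (u + v)" by (rule le_degree)
    thus ?thesis using True degree_add_le_max[of u v] by simp
  qed simp
next
  case False
  thus ?thesis
    by (metis add.commute degree_add_eq_left degree_add_eq_right linorder_neqE_nat
        max.absorb1 max.absorb2 less_imp_le)
qed

lemma dvd_of_same_degree:
  fixes p q :: "'a::field poly"
  assumes "p dvd q" and "q \<noteq> 0" and "degree p = degree q"
  shows "q dvd p"
proof -
  obtain k where k: "q = p * k" using assms(1) by blast
  hence "k \<noteq> 0" "p \<noteq> 0" using assms(2) by auto
  hence "degree k = 0" using k assms(3) by (simp add: degree_mult_eq)
  then obtain c where "k = [:c:]" "c \<noteq> 0" using \<open>k \<noteq> 0\<close> by (metis degree_eq_zeroE pCons_0_0)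
  hence "p = smult (1 / c) q" using k by (simp add: mult.assoc)
  thus ?thesis using dvd_smult[OF dvd_refl] by simp
qed

lemma squarefree_prime_mult_iff:
  fixes g p :: "'a::{idom, algebraic_semidom}"
  assumes prime: "prime_elem g" and "\<not> g dvd p"
  shows "squarefree (g * p) \<longleftrightarrow> squarefree p"
proof
  assume "squarefree p"
  show "squarefree (g * p)"
  proof (rule squarefreeI)
    fix x assume "x\<^sup>2 dvd g * p"
    then obtain k where k: "g * p = x\<^sup>2 * k" by blast
    hence "g dvd x\<^sup>2 \<or> g dvd k" using prime prime_elem_dvd_mult_iff by (metis dvd_triv_left)
    thus "is_unit x"
    proof
      assume "g dvd x\<^sup>2"
      then obtain y where "x = g * y" using prime prime_elem_dvd_power by (metis dvdE)
      hence "g * p = g * (g * (y\<^sup>2 * k))" using k by (simp add: power2_eq_square algebra_simps)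
      hence "g dvd p" using prime by (auto simp: prime_elem_def)
      thus ?thesis using assms(2) by contradiction
    next
      assume "g dvd k"
      then obtain k' where "k = g * k'" by blast
      hence "g * p = g * (x\<^sup>2 * k')" using k by (simp add: algebra_simps)
      hence "x\<^sup>2 dvd p" using prime by (auto simp: prime_elem_def)
      thus ?thesis using \<open>squarefree p\<close> squarefreeD by blast
    qed
  qed
qed (rule squarefree_multD(2))

lemma square_add_pos_mult_square_eq_0:
  fixes x y c :: real
  assumes "x\<^sup>2 + c * y\<^sup>2 = 0" and "c > 0"
  shows "x = 0" and "y = 0"
proof -
  have "c * y\<^sup>2 \<ge> 0" using assms(2) by simp
  hence "x\<^sup>2 = 0" "c * y\<^sup>2 = 0" using assms(1) zero_le_power2[of x] by linarith+
  thus "x = 0" "y = 0" using assms(2) by simp_all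
qed

lemma poly_nonneg_cancel_pos_factor:
  fixes g p :: "real poly"
  assumes "\<And>t. poly (g * p) t \<ge> 0" and "\<And>t. poly g t > 0"
  shows "poly p t \<ge> 0"
  using assms[of t] by (simp add: zero_le_mult_iff)

lemma monic_quadratic_pos:
  fixes g0 g1 t :: real
  assumes "g1\<^sup>2 < 4 * g0"
  shows "poly [:g0, g1, 1:] t > 0"
proof -
  have "4 * poly [:g0, g1, 1:] t = (2 * t + g1)\<^sup>2 + (4 * g0 - g1\<^sup>2)"
    by (simp add: power2_eq_square algebra_simps)
  thus ?thesis using assms by (smt (verit) zero_le_power2)
qed

lemma prime_elem_quadratic_no_roots:
  fixes g :: "real poly"
  assumes deg: "degree g = 2" and no_roots: "\<And>t. poly g t \<noteq> 0"
  shows "prime_elem g"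
proof (rule field_poly_irreducible_imp_prime, rule irreducibleI)
  show "g \<noteq> 0" using deg by auto
  thus "\<not> g dvd 1" using deg by (simp add: is_unit_iff_degree)
  fix a b assume g: "g = a * b"
  show "a dvd 1 \<or> b dvd 1"
  proof (rule ccontr)
    assume "\<not> (a dvd 1 \<or> b dvd 1)"
    moreover have "a \<noteq> 0" "b \<noteq> 0" using g \<open>g \<noteq> 0\<close> by auto
    ultimately have "degree a = 1"
      using deg g by (simp add: is_unit_iff_degree degree_mult_eq)
    hence a: "a = [:coeff a 0, coeff a 1:]" by (intro degree_le_1_poly_eq) simp
    have "coeff a 1 \<noteq> 0" using \<open>a \<noteq> 0\<close> \<open>degree a = 1\<close> by (metis leading_coeff_0_iff)
    hence "poly a (- coeff a 0 / coeff a 1) = 0" by (subst a) simp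
    thus False using no_roots g by (metis mult_eq_0_iff poly_mult)
  qed
qed

lemma linear_poly_nonreal_root_eq_0:
  fixes r :: "real poly"
  assumes "degree r \<le> 1" and root: "poly (map_poly complex_of_real r) z = 0" and "Im z \<noteq> 0"
  shows "r = 0"
proof -
  obtain c0 c1 where r: "r = [:c0, c1:]" using degree_le_1_poly_eq[OF assms(1)] by blast
  have "complex_of_real c0 + complex_of_real c1 * z = 0"
    using root by (simp add: r map_poly_pCons mult.commute)
  hence "c0 + c1 * Re z = 0" "c1 * Im z = 0" by (simp_all add: complex_eq_iff)
  thus ?thesis using assms(3) by (simp add: r)
qed

lemma real_poly_no_roots_quadratic_factor:
  fixes p :: "real poly"
  assumes no_roots: "\<And>t. poly p t \<noteq> 0" and "degree p \<noteq> 0"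
  shows "\<exists>g0 g1. g1\<^sup>2 < 4 * g0 \<and> [:g0, g1, 1:] dvd p"
proof -
  let ?C = "map_poly complex_of_real"
  have "degree (?C p) \<noteq> 0" using assms(2) by (subst degree_map_poly) auto
  then obtain z where z: "poly (?C p) z = 0"
    using fundamental_theorem_of_algebra constant_degree by metis
  have Im_z: "Im z \<noteq> 0"
  proof
    assume "Im z = 0"
    hence "z = of_real (Re z)" by (simp add: complex_eq_iff)
    hence "complex_of_real (poly p (Re z)) = 0" using z by (metis poly_map_poly_of_real)
    thus False using no_roots by simp
  qed
  define g where "g = [:(Re z)\<^sup>2 + (Im z)\<^sup>2, -2 * Re z, 1:]"
  have g_z: "poly (?C g) z = 0"
    by (simp add: g_def map_poly_pCons complex_eq_iff power2_eq_square algebra_simps)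
  have C_add: "?C (a + b) = ?C a + ?C b" and C_mult: "?C (a * b) = ?C a * ?C b" for a b :: "real poly"
    by (auto intro: map_poly_add_hom map_poly_mult_hom)
  have C_p: "?C p = ?C (p div g) * ?C g + ?C (p mod g)"
    by (simp only: C_add[symmetric] C_mult[symmetric] div_mult_mod_eq)
  have "poly (?C (p mod g)) z = 0" using arg_cong[OF C_p, of "\<lambda>a. poly a z"] z g_z by simp
  moreover have "degree (p mod g) \<le> 1"
    using degree_mod_less[of g p] by (auto simp: g_def)
  ultimately have "p mod g = 0" using Im_z linear_poly_nonreal_root_eq_0 by blast
  hence "g dvd p" by (rule mod_0_imp_dvd)
  moreover have "(-2 * Re z)\<^sup>2 < 4 * ((Re z)\<^sup>2 + (Im z)\<^sup>2)"
    using Im_z by (simp add: power_mult_distrib)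
  ultimately show ?thesis unfolding g_def by blast
qed

lemma poly_nonneg_at_limit:
  fixes p :: "real poly"
  assumes "at r within S \<noteq> bot" and "\<And>t. t \<in> S \<Longrightarrow> poly p t \<ge> 0"
  shows "poly p r \<ge> 0"
proof (rule tendsto_lowerbound[OF _ _ assms(1)])
  show "(poly p \<longlongrightarrow> poly p r) (at r within S)" by (intro tendsto_intros)
  show "\<forall>\<^sub>F t in at r within S. poly p t \<ge> 0" using assms(2) by (auto simp: eventually_at_filter)
qed

lemma nonneg_poly_root_square_dvd:
  fixes p :: "real poly"
  assumes nonneg: "\<And>t. poly p t \<ge> 0" and root: "poly p r = 0"
  shows "\<exists>p1. p = [:-r, 1:]\<^sup>2 * p1 \<and> (\<forall>t. poly p1 t \<ge> 0)"
proof -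
  obtain p0 where p0: "p = [:-r, 1:] * p0" using root by (metis dvdE poly_eq_0_iff_dvd)
  have p0_eval: "poly p t = (t - r) * poly p0 t" for t by (simp add: p0 algebra_simps)
  have "poly p0 t \<ge> 0" if "t > r" for t
    using nonneg[of t] that by (simp add: p0_eval zero_le_mult_iff)
  hence "poly p0 r \<ge> 0" using poly_nonneg_at_limit[of r "{r<..}"] trivial_limit_at_right_real by blast
  moreover have "poly (- p0) t \<ge> 0" if "t < r" for t
    using nonneg[of t] that by (simp add: p0_eval zero_le_mult_iff)
  hence "poly (- p0) r \<ge> 0" using poly_nonneg_at_limit[of r "{..<r}"] trivial_limit_at_left_real by blast
  ultimately have "poly p0 r = 0" by simp
  then obtain p1 where p1: "p0 = [:-r, 1:] * p1" by (metis dvdE poly_eq_0_iff_dvd)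
  have p: "p = [:-r, 1:]\<^sup>2 * p1" by (simp only: p0 p1 power2_eq_square mult.assoc)
  have "poly p1 t \<ge> 0" if "t \<noteq> r" for t
    using nonneg[of t] that by (simp add: p zero_le_mult_iff)
  moreover from this have "poly p1 r \<ge> 0"
    using poly_nonneg_at_limit[of r "{r<..}"] trivial_limit_at_right_real by force
  ultimately have "poly p1 t \<ge> 0" for t by (cases "t = r") auto
  thus ?thesis using p by blast
qed

lemma pos_def_quadratic_split:
  fixes q0 q1 q2 g0 g1 g2 :: real
  assumes q2: "q2 > 0" and q_disc: "q1\<^sup>2 < 4 * q0 * q2" and g2: "g2 > 0" and g_disc: "g1\<^sup>2 < 4 * g0 * g2"
  shows "\<exists>a u v. a > 0 \<and> u\<^sup>2 + a * q2 = g2 \<and> 2 * u * v + a * q1 = g1 \<and> v\<^sup>2 + a * q0 = g0"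
proof -
  have q0: "q0 > 0" using q2 q_disc by (smt (verit) mult_nonneg_nonneg zero_le_power2 mult_le_0_iff)
  have g0: "g0 > 0" using g2 g_disc by (smt (verit) mult_nonneg_nonneg zero_le_power2 mult_le_0_iff)
  txt \<open>For the quadratics \<open>q\<close>, \<open>g\<close> with coefficients \<open>q\<^sub>i\<close>, \<open>g\<^sub>i\<close>: the discriminant of \<open>g - l q\<close> is negative at \<open>l = 0\<close> and nonnegative once a leading or
    constant coefficient of \<open>g - l q\<close> vanishes; at a zero \<open>l\<close> of it, \<open>g - l q\<close> is a perfect square.\<close>
  define D where "D = (\<lambda>l::real. (g1 - l * q1)\<^sup>2 - 4 * (g2 - l * q2) * (g0 - l * q0))"
  define L where "L = min (g2 / q2) (g0 / q0)"
  have "D 0 < 0" using g_disc by (simp add: D_def mult_ac)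
  moreover have "D L \<ge> 0"
  proof -
    have "g2 - L * q2 = 0 \<or> g0 - L * q0 = 0" using q2 q0 by (auto simp: L_def min_def field_simps)
    thus ?thesis by (auto simp: D_def)
  qed
  moreover have "continuous_on {0..L} D" unfolding D_def by (intro continuous_intros)
  moreover have "L > 0" using q2 q0 g2 g0 by (simp add: L_def)
  ultimately obtain l where l: "0 \<le> l" "l \<le> L" "D l = 0"
    using IVT'[of D 0 0 L] by auto
  have "l > 0" using l \<open>D 0 < 0\<close> by (cases "l = 0") auto
  have "l \<le> g2 / q2" "l \<le> g0 / q0" using l(2) by (simp_all add: L_def)
  hence u_sq: "g2 - l * q2 \<ge> 0" and v_sq: "g0 - l * q0 \<ge> 0" using q2 q0 by (simp_all add: field_simps)
  define u where "u = sqrt (g2 - l * q2)"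
  define v where "v = (if g1 - l * q1 \<ge> 0 then 1 else -1) * sqrt (g0 - l * q0)"
  have "\<bar>g1 - l * q1\<bar>\<^sup>2 = (2 * u * sqrt (g0 - l * q0))\<^sup>2"
    using l(3) u_sq v_sq by (simp add: D_def u_def power_mult_distrib)
  hence "\<bar>g1 - l * q1\<bar> = 2 * u * sqrt (g0 - l * q0)"
    by (subst (asm) power2_eq_iff_nonneg) (use u_sq v_sq in \<open>simp_all add: u_def\<close>)
  hence uv: "2 * u * v = g1 - l * q1" by (auto simp: v_def abs_if split: if_splits)
  show ?thesis
    by (rule exI[of _ l], rule exI[of _ u], rule exI[of _ v])
      (use \<open>l > 0\<close> u_sq v_sq uv in \<open>auto simp: u_def v_def power_mult_distrib\<close>)
qed

section \<open>The norm form \<open>b\<^sup>2 + Q a\<^sup>2\<close>\<close>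

text \<open>A pair \<open>(a, b)\<close> stands for \<open>b + a \<surd>(-Q)\<close>: \<open>qnorm\<close> is its norm and \<open>qmult\<close> the product of two
  such elements.\<close>

definition qnorm :: "'a::comm_ring_1 \<Rightarrow> 'a \<times> 'a \<Rightarrow> 'a" where
  "qnorm Q w = (snd w)\<^sup>2 + Q * (fst w)\<^sup>2"

definition qmult :: "'a::comm_ring_1 \<Rightarrow> 'a \<times> 'a \<Rightarrow> 'a \<times> 'a \<Rightarrow> 'a \<times> 'a" where
  "qmult Q z w = (fst z * snd w + snd z * fst w, snd z * snd w - Q * fst z * fst w)"

definition qreps :: "'a::comm_ring_1 \<Rightarrow> 'a \<Rightarrow> ('a \<times> 'a) set" where
  "qreps Q p = {w. qnorm Q w = p}"

lemma qnorm_conj [simp]: "qnorm Q (- a, b) = qnorm Q (a, b)"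
  by (simp add: qnorm_def)

lemma qnorm_qmult: "qnorm Q (qmult Q z w) = qnorm Q z * qnorm Q w"
  by (simp add: qnorm_def qmult_def power2_eq_square algebra_simps)

lemma qmult_conj_qmult:
  "qmult Q (- a, b) (qmult Q (a, b) w) = (qnorm Q (a, b) * fst w, qnorm Q (a, b) * snd w)"
  by (simp add: qnorm_def qmult_def power2_eq_square algebra_simps)

lemma inj_qmult:
  fixes Q :: "'a::idom"
  assumes "qnorm Q z \<noteq> 0"
  shows "inj (qmult Q z)"
proof (rule injI)
  fix v w assume "qmult Q z v = qmult Q z w"
  hence "qmult Q (- fst z, snd z) (qmult Q z v) = qmult Q (- fst z, snd z) (qmult Q z w)" by simp
  thus "v = w" using assms qmult_conj_qmult[of Q "fst z" "snd z"] by (simp add: prod_eq_iff)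
qed

lemma qmult_qreps: "w \<in> qreps Q p \<Longrightarrow> qmult Q z w \<in> qreps Q (qnorm Q z * p)"
  by (simp add: qreps_def qnorm_qmult)

lemma qreps_square_mult:
  fixes Q l :: "'a::idom"
  assumes "l \<noteq> 0" and "\<And>w. w \<in> qreps Q (l\<^sup>2 * p) \<Longrightarrow> l dvd fst w \<and> l dvd snd w"
  shows "qreps Q (l\<^sup>2 * p) = qmult Q (0, l) ` qreps Q p"
proof (intro equalityI subsetI)
  fix w assume w: "w \<in> qreps Q (l\<^sup>2 * p)"
  then obtain a b where ab: "w = (l * a, l * b)" using assms(2) by (metis dvdE prod.collapse)
  have "l\<^sup>2 * qnorm Q (a, b) = l\<^sup>2 * p"
    using w by (simp add: qreps_def qnorm_def ab power_mult_distrib algebra_simps)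
  hence "(a, b) \<in> qreps Q p" using assms(1) by (simp add: qreps_def)
  moreover have "w = qmult Q (0, l) (a, b)" by (simp add: qmult_def ab)
  ultimately show "w \<in> qmult Q (0, l) ` qreps Q p" by blast
next
  fix w assume "w \<in> qmult Q (0, l) ` qreps Q p"
  moreover have "qnorm Q (0, l) = l\<^sup>2" by (simp add: qnorm_def)
  ultimately show "w \<in> qreps Q (l\<^sup>2 * p)" by (metis imageE qmult_qreps)
qed

lemma qmult_qreps_divide:
  fixes Q :: "'a::idom"
  assumes g: "g = qnorm Q (a0, b0)" and prime: "prime_elem g"
    and w: "w \<in> qreps Q (g * p)" and dvd: "g dvd fst (qmult Q (- a0, b0) w)"
  shows "w \<in> qmult Q (a0, b0) ` qreps Q p"
proof -
  have "g \<noteq> 0" using prime by auto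
  define v where "v = qmult Q (- a0, b0) w"
  obtain x where x: "fst v = g * x" using dvd by (auto simp: v_def)
  have "qnorm Q v = g * (g * p)" using w g by (simp add: v_def qreps_def qnorm_qmult)
  hence "(snd v)\<^sup>2 = g * (g * p - Q * g * x\<^sup>2)"
    by (simp add: qnorm_def x power2_eq_square algebra_simps)
  hence "g dvd snd v" using prime prime_elem_dvd_power by (metis dvd_triv_left)
  then obtain y where y: "snd v = g * y" by blast
  have "qmult Q (a0, b0) v = (g * fst w, g * snd w)"
    using qmult_conj_qmult[of Q "- a0" b0 w] g by (simp add: v_def)
  moreover have "qmult Q (a0, b0) v = (g * fst (qmult Q (a0, b0) (x, y)), g * snd (qmult Q (a0, b0) (x, y)))"
    by (simp add: qmult_def x y algebra_simps)
  ultimately have w_eq: "w = qmult Q (a0, b0) (x, y)"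
    using \<open>g \<noteq> 0\<close> by (simp add: prod_eq_iff)
  hence "g * qnorm Q (x, y) = g * p" using w g by (simp add: qreps_def qnorm_qmult)
  hence "(x, y) \<in> qreps Q p" using \<open>g \<noteq> 0\<close> by (simp add: qreps_def)
  thus ?thesis using w_eq by blast
qed

lemma qreps_prime_mult:
  fixes Q :: "'a::idom"
  assumes g: "g = qnorm Q (a0, b0)" and prime: "prime_elem g"
  shows "qreps Q (g * p) = qmult Q (a0, b0) ` qreps Q p \<union> qmult Q (- a0, b0) ` qreps Q p"
proof (intro equalityI subsetI)
  fix w assume w: "w \<in> qreps Q (g * p)"
  obtain a b where ab: "w = (a, b)" by fastforce
  have "fst (qmult Q (- a0, b0) w) * fst (qmult Q (a0, b0) w) = a\<^sup>2 * g - a0\<^sup>2 * qnorm Q w"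
    by (simp add: ab g qmult_def qnorm_def power2_eq_square algebra_simps)
  also have "\<dots> = g * (a\<^sup>2 - a0\<^sup>2 * p)" using w by (simp add: qreps_def algebra_simps)
  finally have "g dvd fst (qmult Q (- a0, b0) w) \<or> g dvd fst (qmult Q (- (- a0), b0) w)"
    using prime prime_elem_dvd_mult_iff by (metis dvd_triv_left minus_minus)
  thus "w \<in> qmult Q (a0, b0) ` qreps Q p \<union> qmult Q (- a0, b0) ` qreps Q p"
    using qmult_qreps_divide[OF g prime w] qmult_qreps_divide[of g Q "- a0" b0, OF _ prime w] g
    by auto
next
  fix w assume "w \<in> qmult Q (a0, b0) ` qreps Q p \<union> qmult Q (- a0, b0) ` qreps Q p"
  moreover have "qnorm Q (a0, b0) = g" "qnorm Q (- a0, b0) = g" using g by simp_all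
  ultimately show "w \<in> qreps Q (g * p)" by (metis UnE imageE qmult_qreps)
qed

lemma qmult_images_disjoint:
  fixes Q g a0 b0 :: "'a::{idom, algebraic_semidom}"
  assumes g: "g = qnorm Q (a0, b0)" and unit: "is_unit (2 * a0)" and prime: "prime_elem g"
    and "\<not> g dvd Q" and "\<not> g dvd p"
  shows "qmult Q (a0, b0) ` qreps Q p \<inter> qmult Q (- a0, b0) ` qreps Q p = {}"
proof (rule ccontr)
  assume "qmult Q (a0, b0) ` qreps Q p \<inter> qmult Q (- a0, b0) ` qreps Q p \<noteq> {}"
  then obtain w1 w2 where w1: "w1 \<in> qreps Q p"
    and eq: "qmult Q (a0, b0) w1 = qmult Q (- a0, b0) w2" by blast
  obtain a b where ab: "qmult Q (a0, b0) w1 = (a, b)" by fastforce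
  have "qmult Q (- a0, b0) (a, b) = (g * fst w1, g * snd w1)"
    using qmult_conj_qmult[of Q a0 b0 w1] g by (simp add: ab)
  moreover have "qmult Q (- a0, b0) w2 = (a, b)" using ab eq by simp
  hence "qmult Q (a0, b0) (a, b) = (g * fst w2, g * snd w2)"
    using qmult_conj_qmult[of Q "- a0" b0 w2] g by simp
  ultimately have "b * (2 * a0) = g * (fst w2 - fst w1)" and "Q * a * (2 * a0) = g * (snd w1 - snd w2)"
    by (auto simp: qmult_def prod_eq_iff algebra_simps)
  hence "g dvd b" and "g dvd Q * a" using unit by (metis dvd_mult_unit_iff dvd_triv_left)+
  hence "g dvd a" and "g dvd b" using prime assms(4) prime_elem_dvd_mult_iff by blast+
  then obtain a' b' where "a = g * a'" "b = g * b'" by (elim dvdE)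
  hence "g * p = g * (g * qnorm Q (a', b'))"
    using w1 g qnorm_qmult[of Q "(a0, b0)" w1]
    by (simp add: ab qreps_def qnorm_def power2_eq_square algebra_simps)
  hence "g dvd p" using prime by (auto simp: prime_elem_def)
  thus False using assms(5) by contradiction
qed

section \<open>Positive definite quadratics\<close>

locale pos_quadratic =
  fixes Q :: "real poly"
  assumes poly_pos: "\<And>t. poly Q t > 0" and degree_eq_2: "degree Q = 2"
    and lead_coeff_pos: "lead_coeff Q > 0"
begin

lemma nonzero: "Q \<noteq> 0"
  using degree_eq_2 by auto

lemma prime: "prime_elem Q"
  using prime_elem_quadratic_no_roots degree_eq_2 poly_pos by (metis less_irrefl)

lemma eq_coeffs: "Q = [:coeff Q 0, coeff Q 1, coeff Q 2:]"
  by (rule poly_eqI) (auto simp: coeff_pCons coeff_eq_0 degree_eq_2 numeral_2_eq_2 split: nat.split)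

lemma discriminant_neg: "(coeff Q 1)\<^sup>2 < 4 * coeff Q 0 * coeff Q 2"
proof -
  have q2: "coeff Q 2 > 0" using lead_coeff_pos degree_eq_2 by simp
  have "poly Q (- coeff Q 1 / (2 * coeff Q 2)) > 0" by (rule poly_pos)
  hence "coeff Q 0 - (coeff Q 1)\<^sup>2 / (4 * coeff Q 2) > 0"
    using q2 by (subst (asm) eq_coeffs) (simp add: power2_eq_square field_simps)
  thus ?thesis using q2 by (simp add: field_simps)
qed

lemma degree_qnorm:
  "degree (qnorm Q (a, b)) = max (2 * degree b) (if a = 0 then 0 else 2 + 2 * degree a)"
proof -
  have "degree (qnorm Q (a, b)) = max (degree (b\<^sup>2)) (degree (Q * a\<^sup>2))"
    unfolding qnorm_def fst_conv snd_conv using lead_coeff_pos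
    by (intro degree_add_lead_coeff_nonneg) (simp_all add: lead_coeff_mult lead_coeff_power)
  moreover have "degree (b\<^sup>2) = 2 * degree b" by (cases "b = 0") (auto simp: degree_power_eq)
  ultimately show ?thesis using nonzero degree_eq_2 by (auto simp: degree_mult_eq degree_power_eq)
qed

lemma qnorm_eq_0_iff: "qnorm Q w = 0 \<longleftrightarrow> w = (0, 0)"
proof
  assume w: "qnorm Q w = 0"
  have "poly (snd w) t = 0 \<and> poly (fst w) t = 0" for t
  proof -
    have "(poly (snd w) t)\<^sup>2 + poly Q t * (poly (fst w) t)\<^sup>2 = 0"
      using arg_cong[OF w, of "\<lambda>p. poly p t"] by (simp add: qnorm_def)
    thus ?thesis using square_add_pos_mult_square_eq_0 poly_pos by blast
  qed
  hence "snd w = 0" "fst w = 0" using poly_all_0_iff_0 by blast+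
  thus "w = (0, 0)" by (simp add: prod_eq_iff)
qed (simp add: qnorm_def)

lemma qnorm_of_pos_quadratic:
  assumes "pos_quadratic g"
  obtains a0 b0 where "g = qnorm Q (a0, b0)" and "is_unit (2 * a0)"
proof -
  interpret g: pos_quadratic g by fact
  obtain a u v where "a > 0" and uv: "u\<^sup>2 + a * coeff Q 2 = coeff g 2"
      "2 * u * v + a * coeff Q 1 = coeff g 1" "v\<^sup>2 + a * coeff Q 0 = coeff g 0"
    using pos_def_quadratic_split[OF _ discriminant_neg _ g.discriminant_neg]
      lead_coeff_pos g.lead_coeff_pos degree_eq_2 g.degree_eq_2 by auto
  have "g = qnorm Q ([:sqrt a:], [:v, u:])"
    using \<open>a > 0\<close> by (subst g.eq_coeffs, subst eq_coeffs)
      (simp add: qnorm_def power2_eq_square flip: uv uv[unfolded One_nat_def])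
  moreover have "is_unit (2 * [:sqrt a:])" using \<open>a > 0\<close> by (simp add: is_unit_iff_degree)
  ultimately show ?thesis using that by blast
qed

end

lemma pos_quadratic_monic:
  assumes "g1\<^sup>2 < 4 * g0"
  shows "pos_quadratic [:g0, g1, 1:]"
  by unfold_locales (rule monic_quadratic_pos[OF assms], simp_all)

lemma nonneg_poly_decompose:
  fixes p :: "real poly"
  assumes nonneg: "\<And>t. poly p t \<ge> 0" and "degree p \<noteq> 0"
  obtains (root) r p1 where "p = [:- r, 1:]\<^sup>2 * p1" and "\<And>t. poly p1 t \<ge> 0"
  | (quadratic) g p1 where "pos_quadratic g" and "p = g * p1" and "\<And>t. poly p1 t \<ge> 0"
proof (cases "\<exists>r. poly p r = 0")
  case True
  thus ?thesis using nonneg_poly_root_square_dvd nonneg root by metis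
next
  case False
  then obtain g0 g1 p1 where disc: "g1\<^sup>2 < 4 * g0" and p: "p = [:g0, g1, 1:] * p1"
    using real_poly_no_roots_quadratic_factor assms(2) by blast
  have "poly p1 t \<ge> 0" for t
    by (rule poly_nonneg_cancel_pos_factor[of "[:g0, g1, 1:]"])
      (use nonneg p monic_quadratic_pos[OF disc] in auto)
  thus ?thesis using quadratic pos_quadratic_monic[OF disc] p by blast
qed

section \<open>Counting representations\<close>

definition qreps_card_law :: "real poly \<Rightarrow> real poly \<Rightarrow> bool" where
  "qreps_card_law Q p \<longleftrightarrow> finite (qreps Q p) \<and> card (qreps Q p) \<le> 2 ^ (degree p div 2 + 1) \<and>
     (card (qreps Q p) = 2 ^ (degree p div 2 + 1) \<longleftrightarrow> squarefree p \<and> \<not> Q dvd p)"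

lemma qreps_card_law_qmult_image:
  assumes S: "qreps Q p = qmult Q z ` qreps Q p1" and "qnorm Q z \<noteq> 0"
    and deg: "degree p = degree p1 + 2" and law: "qreps_card_law Q p1"
    and "\<not> squarefree p \<or> Q dvd p"
  shows "qreps_card_law Q p"
proof -
  have "card (qreps Q p) = card (qreps Q p1)"
    unfolding S using inj_qmult[OF assms(2)] by (simp add: card_image inj_on_subset)
  also have "\<dots> \<le> 2 ^ (degree p div 2)" using law deg by (simp add: qreps_card_law_def)
  also have "\<dots> < 2 ^ (degree p div 2 + 1)" by simp
  finally have "card (qreps Q p) < 2 ^ (degree p div 2 + 1)" .
  moreover have "finite (qreps Q p)" using law S by (simp add: qreps_card_law_def)
  ultimately show ?thesis using assms(5) unfolding qreps_card_law_def by auto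
qed

context pos_quadratic
begin

lemma qreps_0: "qreps Q 0 = {(0, 0)}"
  by (auto simp: qreps_def qnorm_eq_0_iff)

lemma qreps_const:
  assumes "c > 0"
  shows "qreps Q [:c:] = {(0, [:sqrt c:]), (0, [:- sqrt c:])}"
proof (intro equalityI subsetI)
  fix w assume w: "w \<in> qreps Q [:c:]"
  obtain a b where ab: "w = (a, b)" by fastforce
  hence "a = 0" and "degree b = 0"
    using arg_cong[OF w[unfolded qreps_def mem_Collect_eq], of degree]
    by (auto simp: degree_qnorm split: if_splits)
  then obtain \<beta> where b: "b = [:\<beta>:]" by (metis degree_eq_zeroE)
  hence "\<beta>\<^sup>2 = c" using w \<open>a = 0\<close> by (simp add: ab qreps_def qnorm_def power2_eq_square)
  hence "\<beta> = sqrt c \<or> \<beta> = - sqrt c" using real_sqrt_abs[of \<beta>] by (auto simp: abs_if split: if_splits)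
  thus "w \<in> {(0, [:sqrt c:]), (0, [:- sqrt c:])}" using ab b \<open>a = 0\<close> by auto
qed (use assms in \<open>auto simp: qreps_def qnorm_def power2_eq_square\<close>)

lemma qreps_linear_square_mult:
  "qreps Q ([:- r, 1:]\<^sup>2 * p) = qmult Q (0, [:- r, 1:]) ` qreps Q p"
proof (rule qreps_square_mult)
  fix w assume "w \<in> qreps Q ([:- r, 1:]\<^sup>2 * p)"
  hence "poly (qnorm Q w) r = 0" by (simp add: qreps_def)
  hence "(poly (snd w) r)\<^sup>2 + poly Q r * (poly (fst w) r)\<^sup>2 = 0" by (simp add: qnorm_def)
  hence "poly (fst w) r = 0" "poly (snd w) r = 0"
    using square_add_pos_mult_square_eq_0 poly_pos by blast+
  thus "[:- r, 1:] dvd fst w \<and> [:- r, 1:] dvd snd w" by (simp add: poly_eq_0_iff_dvd)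
qed simp

lemma qreps_Q_mult: "qreps Q (Q * p) = qmult Q (1, 0) ` qreps Q p"
proof (intro equalityI subsetI)
  fix w assume w: "w \<in> qreps Q (Q * p)"
  obtain a b where ab: "w = (a, b)" by fastforce
  have "b\<^sup>2 = Q * (p - a\<^sup>2)" using w by (simp add: qreps_def qnorm_def ab algebra_simps)
  hence "Q dvd b" using prime prime_elem_dvd_power by (metis dvd_triv_left)
  then obtain c where c: "b = Q * c" by blast
  have "Q * qnorm Q (- c, a) = Q * p"
    using w by (simp add: qreps_def qnorm_def ab c power2_eq_square algebra_simps)
  hence "(- c, a) \<in> qreps Q p" using nonzero by (simp add: qreps_def)
  moreover have "w = qmult Q (1, 0) (- c, a)" by (simp add: qmult_def ab c)
  ultimately show "w \<in> qmult Q (1, 0) ` qreps Q p" by blast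
next
  fix w assume "w \<in> qmult Q (1, 0) ` qreps Q p"
  moreover have "qnorm Q (1, 0) = Q" by (simp add: qnorm_def)
  ultimately show "w \<in> qreps Q (Q * p)" by (metis imageE qmult_qreps)
qed

lemma qreps_card_law_const:
  assumes "c > 0"
  shows "qreps_card_law Q [:c:]"
proof -
  have "squarefree [:c:]" using assms by (simp add: squarefree_unit is_unit_iff_degree)
  moreover have "\<not> Q dvd [:c:]" using assms dvd_imp_degree_le[of Q "[:c:]"] degree_eq_2 by auto
  ultimately show ?thesis using assms by (simp add: qreps_card_law_def qreps_const)
qed

lemma qreps_card_law_prime_mult:
  assumes g: "g = qnorm Q (a0, b0)" and unit: "is_unit (2 * a0)" and prime: "prime_elem g"
    and deg_g: "degree g = 2" and Q_ndvd: "\<not> Q dvd g * p" and law: "qreps_card_law Q p"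
    and nonempty: "\<And>p2. p = g * p2 \<Longrightarrow> qreps Q p2 \<noteq> {}"
  shows "qreps_card_law Q (g * p)"
proof -
  define S M M' where "S = qreps Q p" and "M = qmult Q (a0, b0)" and "M' = qmult Q (- a0, b0)"
  have split: "qreps Q (g * p) = M ` S \<union> M' ` S"
    unfolding S_def M_def M'_def by (rule qreps_prime_mult[OF g prime])
  have "g \<noteq> 0" using deg_g by auto
  hence "inj M" "inj M'" unfolding M_def M'_def using g by (auto intro!: inj_qmult)
  hence card_M: "card (M ` S) = card S" "card (M' ` S) = card S"
    by (simp_all add: card_image inj_on_subset)
  have fin: "finite S" and bound: "card S \<le> 2 ^ (degree p div 2 + 1)"
    and iff: "card S = 2 ^ (degree p div 2 + 1) \<longleftrightarrow> squarefree p \<and> \<not> Q dvd p"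
    using law by (simp_all add: qreps_card_law_def S_def)
  have "p \<noteq> 0" using Q_ndvd by auto
  hence deg: "degree (g * p) div 2 + 1 = (degree p div 2 + 1) + 1"
    using deg_g \<open>g \<noteq> 0\<close> by (simp add: degree_mult_eq)
  have "\<not> Q dvd p" "\<not> Q dvd g" using Q_ndvd by (auto intro: dvd_mult dvd_mult2)
  hence "\<not> g dvd Q" using dvd_of_same_degree[of g Q] nonzero deg_g degree_eq_2 by auto
  show ?thesis
  proof (cases "g dvd p")
    case True
    then obtain p2 where p2: "p = g * p2" ..
    then obtain w0 where "w0 \<in> qreps Q p2" using nonempty by blast
    hence "M w0 \<in> S" "M' w0 \<in> S"
      using g p2 qmult_qreps[of w0 Q p2 "(a0, b0)"] qmult_qreps[of w0 Q p2 "(- a0, b0)"]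
      by (simp_all add: S_def M_def M'_def)
    moreover have "M' (M w0) = M (M' w0)"
      using qmult_conj_qmult[of Q a0 b0 w0] qmult_conj_qmult[of Q "- a0" b0 w0] g
      by (simp add: M_def M'_def)
    ultimately have "M ` S \<inter> M' ` S \<noteq> {}" by blast
    hence "card (M ` S \<inter> M' ` S) > 0" using fin by (simp add: card_gt_0_iff)
    hence "card (qreps Q (g * p)) < 2 * card S"
      using card_Un_Int[of "M ` S" "M' ` S"] fin card_M split by simp
    moreover have "\<not> squarefree (g * p)"
      using p2 prime by (intro not_squarefreeI[of g]) (auto simp: power2_eq_square prime_elem_def)
    ultimately show ?thesis
      using bound fin split deg by (auto simp: qreps_card_law_def)
  next
    case False
    have "M ` S \<inter> M' ` S = {}" unfolding M_def M'_def S_def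
      using qmult_images_disjoint[OF g unit prime \<open>\<not> g dvd Q\<close> False] by simp
    hence "card (qreps Q (g * p)) = 2 * card S"
      using card_Un_disjoint[of "M ` S" "M' ` S"] fin card_M split by simp
    moreover have "squarefree (g * p) \<longleftrightarrow> squarefree p" by (rule squarefree_prime_mult_iff[OF prime False])
    ultimately show ?thesis
      using bound iff fin split deg Q_ndvd \<open>\<not> Q dvd p\<close> by (auto simp: qreps_card_law_def)
  qed
qed

lemma qreps_nonempty:
  assumes "\<And>t. poly p t \<ge> 0"
  shows "qreps Q p \<noteq> {}"
  using assms
proof (induction "degree p" arbitrary: p rule: less_induct)
  case less
  show ?case
  proof (cases "degree p = 0")
    case True
    then obtain c where p: "p = [:c:]" by (metis degree_eq_zeroE)
    hence "c \<ge> 0" using less.prems[of 0] by simp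
    hence "(0, [:sqrt c:]) \<in> qreps Q p" by (simp add: p qreps_def qnorm_def power2_eq_square)
    thus ?thesis by blast
  next
    case False
    hence "p \<noteq> 0" by auto
    from less.prems False show ?thesis
    proof (cases rule: nonneg_poly_decompose)
      case (root r p1)
      hence "degree p1 < degree p" using \<open>p \<noteq> 0\<close> by (auto simp: degree_mult_eq degree_power_eq)
      then obtain w where "w \<in> qreps Q p1" using less root by blast
      hence "qmult Q (0, [:- r, 1:]) w \<in> qreps Q p" using root qreps_linear_square_mult by blast
      thus ?thesis by blast
    next
      case (quadratic g p1)
      obtain a0 b0 where g: "g = qnorm Q (a0, b0)" by (rule qnorm_of_pos_quadratic[OF quadratic(1)])
      have "degree p1 < degree p"
        using quadratic pos_quadratic.degree_eq_2 \<open>p \<noteq> 0\<close> by (auto simp: degree_mult_eq)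
      then obtain w where "w \<in> qreps Q p1" using less quadratic by blast
      hence "qmult Q (a0, b0) w \<in> qreps Q p" using qmult_qreps[of w Q p1 "(a0, b0)"] g quadratic(2) by simp
      thus ?thesis by blast
    qed
  qed
qed

lemma qreps_card_law:
  assumes "\<And>t. poly p t \<ge> 0"
  shows "qreps_card_law Q p"
  using assms
proof (induction "degree p" arbitrary: p rule: less_induct)
  case less
  consider "p = 0" | "p \<noteq> 0" "degree p = 0" | "Q dvd p" "p \<noteq> 0" | "\<not> Q dvd p" "degree p \<noteq> 0" by blast
  thus ?case
  proof cases
    case 1
    thus ?thesis by (simp add: qreps_card_law_def qreps_0)
  next
    case 2
    then obtain c where p: "p = [:c:]" "c \<noteq> 0" by (metis degree_eq_zeroE pCons_0_0)
    hence "c > 0" using less.prems[of 0] by simp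
    thus ?thesis using p qreps_card_law_const by simp
  next
    case 3
    then obtain p1 where p1: "p = Q * p1" by blast
    have "p1 \<noteq> 0" using 3 p1 by auto
    have nonneg: "poly p1 t \<ge> 0" for t
      by (rule poly_nonneg_cancel_pos_factor[of Q]) (use less.prems p1 poly_pos in auto)
    have deg: "degree p = degree p1 + 2"
      using p1 \<open>p1 \<noteq> 0\<close> nonzero degree_eq_2 by (simp add: degree_mult_eq)
    hence "qreps_card_law Q p1" using less nonneg by simp
    thus ?thesis using qreps_card_law_qmult_image[OF _ _ deg] 3 p1 nonzero
      by (simp add: qreps_Q_mult qnorm_def)
  next
    case 4
    from less.prems 4(2) show ?thesis
    proof (cases rule: nonneg_poly_decompose)
      case (root r p1)
      hence "p1 \<noteq> 0" using 4 by auto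
      hence deg: "degree p = degree p1 + 2" using root by (simp add: degree_mult_eq degree_power_eq)
      hence "qreps_card_law Q p1" using less root by simp
      moreover have "\<not> squarefree p"
        using root by (intro not_squarefreeI[of "[:- r, 1:]"]) (simp_all add: is_unit_iff_degree)
      ultimately show ?thesis using qreps_card_law_qmult_image[OF _ _ deg] root
        by (simp add: qreps_linear_square_mult qnorm_def)
    next
      case (quadratic g p1)
      interpret g: pos_quadratic g by (fact quadratic(1))
      obtain a0 b0 where g: "g = qnorm Q (a0, b0)" and unit: "is_unit (2 * a0)"
        by (rule qnorm_of_pos_quadratic[OF quadratic(1)])
      have "p1 \<noteq> 0" using 4 quadratic by auto
      hence "degree p1 < degree p" using quadratic g.nonzero g.degree_eq_2 by (simp add: degree_mult_eq)
      hence "qreps_card_law Q p1" using less quadratic by simp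
      moreover have "qreps Q p2 \<noteq> {}" if "p1 = g * p2" for p2
      proof (rule qreps_nonempty)
        show "poly p2 t \<ge> 0" for t
          by (rule poly_nonneg_cancel_pos_factor[of g]) (use quadratic(3) that g.poly_pos in auto)
      qed
      ultimately show ?thesis
        using qreps_card_law_prime_mult[OF g unit g.prime g.degree_eq_2] quadratic 4 by simp
    qed
  qed
qed

end

section \<open>Forms and dehomogenization\<close>

text \<open>\<open>dehomog f\<close> is \<open>f(1, y)\<close>, and \<open>homog n a\<close> is the form \<open>x\<^sup>n a(y/x)\<close> of degree \<open>n\<close>.\<close>

definition dehomog :: "bipoly \<Rightarrow> real poly" where
  "dehomog f = map_poly (\<lambda>c. poly c 1) f"

definition homog :: "nat \<Rightarrow> real poly \<Rightarrow> bipoly" where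
  "homog n a = (\<Sum>j\<le>n. monom (monom (coeff a j) (n - j)) j)"

lemma dehomog_add: "dehomog (f + g) = dehomog f + dehomog g"
  unfolding dehomog_def by (rule map_poly_add_hom) auto

lemma dehomog_mult: "dehomog (f * g) = dehomog f * dehomog g"
  unfolding dehomog_def by (rule map_poly_mult_hom) auto

lemma dehomog_power: "dehomog (f ^ k) = dehomog f ^ k"
  by (induction k) (simp add: dehomog_def, simp add: dehomog_mult)

lemma dehomog_dvd: "f dvd g \<Longrightarrow> dehomog f dvd dehomog g"
  by (elim dvdE) (simp add: dehomog_mult)

lemma poly_dehomog: "poly (dehomog f) t = eval2 f 1 t"
  by (simp add: eval2_def dehomog_def)

lemma coeff_homog: "coeff (homog n a) j = (if j \<le> n then monom (coeff a j) (n - j) else 0)"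
  by (simp add: homog_def coeff_sum coeff_monom)

lemma is_form_homog: "is_form n (homog n a)"
  by (auto simp: is_form_def coeff_homog coeff_monom split: if_splits)

lemma homog_0: "homog n 0 = 0"
  by (rule poly_eqI) (simp add: coeff_homog)

lemma homog_add: "homog n (a + b) = homog n a + homog n b"
  by (rule poly_eqI) (simp add: coeff_homog add_monom)

lemma dehomog_homog: "degree a \<le> n \<Longrightarrow> dehomog (homog n a) = a"
  by (rule poly_eqI) (auto simp: dehomog_def coeff_map_poly coeff_homog poly_monom coeff_eq_0)

lemma form_coeff_eq_monom:
  assumes "is_form n f"
  shows "coeff f j = monom (coeff (coeff f j) (n - j)) (n - j)"
proof (rule poly_eqI)
  fix i
  have "coeff (coeff f j) i = 0" if "i \<noteq> n - j" using assms that unfolding is_form_def by force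
  thus "coeff (coeff f j) i = coeff (monom (coeff (coeff f j) (n - j)) (n - j)) i"
    by (cases "i = n - j") (simp_all add: coeff_monom)
qed

lemma form_coeff_eq_0:
  assumes "is_form n f" and "j > n"
  shows "coeff f j = 0"
  using assms unfolding is_form_def by (intro poly_eqI) force

lemma homog_dehomog:
  assumes "is_form n f"
  shows "homog n (dehomog f) = f"
proof (rule poly_eqI)
  fix j
  obtain c where c: "coeff f j = monom c (n - j)" using form_coeff_eq_monom[OF assms] by blast
  show "coeff (homog n (dehomog f)) j = coeff f j"
  proof (cases "j \<le> n")
    case True
    thus ?thesis by (simp add: coeff_homog dehomog_def coeff_map_poly poly_monom c)
  next
    case False
    thus ?thesis using form_coeff_eq_0[OF assms] by (simp add: coeff_homog)
  qed
qed

lemma degree_form_le: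
  assumes "is_form n f"
  shows "degree f \<le> n"
  by (rule degree_le) (simp add: form_coeff_eq_0[OF assms])

lemma degree_dehomog_le:
  assumes "is_form n f"
  shows "degree (dehomog f) \<le> n"
  by (rule degree_le) (simp add: dehomog_def coeff_map_poly form_coeff_eq_0[OF assms])

lemma dehomog_eq_0_iff:
  assumes "is_form n f"
  shows "dehomog f = 0 \<longleftrightarrow> f = 0"
  using homog_dehomog[OF assms] homog_0 by (auto simp: dehomog_def)

lemma is_unit_dehomog: "is_unit f \<Longrightarrow> is_unit (dehomog f)"
  using dehomog_dvd[of f 1] by (simp add: dehomog_def)

lemma form_eq_iff_dehomog_eq:
  assumes "is_form n f" and "is_form n g"
  shows "f = g \<longleftrightarrow> dehomog f = dehomog g"
  using homog_dehomog[OF assms(1)] homog_dehomog[OF assms(2)] by metis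

lemma is_form_mult:
  assumes "is_form m f" and "is_form n g"
  shows "is_form (m + n) (f * g)"
  unfolding is_form_def
proof (intro allI impI)
  fix i j
  assume "coeff (coeff (f * g) j) i \<noteq> 0"
  hence "(\<Sum>k\<le>j. coeff (coeff f k * coeff g (j - k)) i) \<noteq> 0"
    by (simp add: coeff_mult coeff_sum)
  then obtain k where k: "k \<le> j" "coeff (coeff f k * coeff g (j - k)) i \<noteq> 0"
    by (metis (no_types, lifting) atMost_iff sum.neutral)
  hence "(\<Sum>l\<le>i. coeff (coeff f k) l * coeff (coeff g (j - k)) (i - l)) \<noteq> 0"
    by (simp add: coeff_mult)
  then obtain l where l: "l \<le> i" "coeff (coeff f k) l * coeff (coeff g (j - k)) (i - l) \<noteq> 0"
    by (metis (no_types, lifting) atMost_iff sum.neutral)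
  hence "l + k = m" "(i - l) + (j - k) = n" using assms unfolding is_form_def by auto
  thus "i + j = m + n" using k(1) l(1) by linarith
qed

lemma homog_mult:
  assumes "degree a \<le> m" and "degree b \<le> k"
  shows "homog (m + k) (a * b) = homog m a * homog k b"
proof -
  have "degree (a * b) \<le> m + k" using assms degree_mult_le[of a b] by linarith
  thus ?thesis using assms is_form_mult[OF is_form_homog is_form_homog]
    by (simp add: form_eq_iff_dehomog_eq[OF is_form_homog] dehomog_mult dehomog_homog)
qed

lemma eval2_form_0_1:
  assumes "is_form n f"
  shows "eval2 f 0 1 = coeff (dehomog f) n"
proof -
  have "coeff (map_poly (\<lambda>c. poly c 0) f) j = coeff (monom (coeff (dehomog f) n) n) j" for j
  proof -
    obtain c where c: "coeff f j = monom c (n - j)" using form_coeff_eq_monom[OF assms] by blast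
    consider "j > n" | "j < n" | "j = n" by linarith
    thus ?thesis
    proof cases
      case 1
      thus ?thesis by (simp add: coeff_map_poly form_coeff_eq_0[OF assms])
    qed (use c in \<open>simp_all add: coeff_map_poly poly_monom dehomog_def\<close>)
  qed
  hence "map_poly (\<lambda>c. poly c 0) f = monom (coeff (dehomog f) n) n" by (rule poly_eqI)
  thus ?thesis by (simp add: eval2_def poly_monom)
qed

lemma pos_quadratic_dehomog:
  assumes "is_form 2 q" and "pos_def2 q"
  shows "pos_quadratic (dehomog q)"
proof
  show "poly (dehomog q) t > 0" for t
    using assms(2) by (simp add: pos_def2_def poly_dehomog)
  have "coeff (dehomog q) 2 > 0"
    using assms by (simp add: pos_def2_def flip: eval2_form_0_1[OF assms(1)])
  moreover have "degree (dehomog q) \<le> 2" by (rule degree_dehomog_le[OF assms(1)])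
  ultimately show "degree (dehomog q) = 2" by (metis le_antisym le_degree less_irrefl)
  thus "lead_coeff (dehomog q) > 0" using \<open>coeff (dehomog q) 2 > 0\<close> by simp
qed

lemma squarefree_dehomog:
  assumes f: "is_form n f" and "squarefree f"
  shows "squarefree (dehomog f)"
proof (rule squarefreeI)
  fix x assume "x\<^sup>2 dvd dehomog f"
  then obtain k where k: "dehomog f = x * (x * k)" by (metis dvdE power2_eq_square mult.assoc)
  have "dehomog f \<noteq> 0" using assms dehomog_eq_0_iff by auto
  hence "x \<noteq> 0" "k \<noteq> 0" using k by auto
  hence deg: "degree x + (degree x + degree k) \<le> n"
    using degree_dehomog_le[OF f] k by (simp add: degree_mult_eq)
  define X where "X = homog (degree x) x"
  have "f = homog (degree x + (degree x + (n - 2 * degree x))) (x * (x * k))"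
    using homog_dehomog[OF f] k deg by (simp add: algebra_simps)
  also have "\<dots> = X * homog (degree x + (n - 2 * degree x)) (x * k)"
    unfolding X_def using deg \<open>x \<noteq> 0\<close> \<open>k \<noteq> 0\<close> by (intro homog_mult) (auto simp: degree_mult_eq)
  also have "homog (degree x + (n - 2 * degree x)) (x * k) = X * homog (n - 2 * degree x) k"
    unfolding X_def using deg by (intro homog_mult) auto
  finally have "X\<^sup>2 dvd f" by (metis dvd_triv_left mult.assoc power2_eq_square)
  hence "is_unit (dehomog X)" using assms(2) squarefreeD is_unit_dehomog by blast
  thus "is_unit x" by (simp add: X_def dehomog_homog)
qed

lemma degree_dehomog_eq_if_squarefree:
  assumes f: "is_form (2 * d) f" and "squarefree f" and "even (degree (dehomog f))"
  shows "degree (dehomog f) = 2 * d"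
proof (rule ccontr)
  assume "degree (dehomog f) \<noteq> 2 * d"
  hence deg: "degree (dehomog f) \<le> 2 * d - 2" and "d \<ge> 1"
    using degree_dehomog_le[OF f] assms(3) by (auto elim!: evenE)
  define X where "X = homog 1 1"
  have "1 + (1 + (2 * d - 2)) = 2 * d" using \<open>d \<ge> 1\<close> by simp
  hence "f = homog (1 + (1 + (2 * d - 2))) (1 * (1 * dehomog f))" using homog_dehomog[OF f] by simp
  also have "\<dots> = X * homog (1 + (2 * d - 2)) (1 * dehomog f)"
    unfolding X_def by (rule homog_mult) (use deg in auto)
  also have "homog (1 + (2 * d - 2)) (1 * dehomog f) = X * homog (2 * d - 2) (dehomog f)"
    unfolding X_def using homog_mult[of 1 1 "dehomog f" "2 * d - 2"] deg by simp
  finally have "X\<^sup>2 dvd f" by (metis dvd_triv_left mult.assoc power2_eq_square)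
  hence "is_unit X" using assms(2) squarefreeD by blast
  moreover have "X = [:[:0, 1:]:]" by (simp add: X_def homog_def monom_0 monom_Suc)
  ultimately show False by (simp add: is_unit_const_poly_iff is_unit_iff_degree)
qed

lemma squarefree_form_if_dehomog:
  assumes f: "is_form n f" and deg: "degree (dehomog f) = n" and sf: "squarefree (dehomog f)"
  shows "squarefree f"
proof (rule squarefreeI)
  fix x assume "x\<^sup>2 dvd f"
  then obtain k where k: "f = x\<^sup>2 * k" by blast
  have "f \<noteq> 0" using sf dehomog_eq_0_iff[OF f] by auto
  hence "x \<noteq> 0" "k \<noteq> 0" using k by auto
  have pk: "dehomog f = (dehomog x)\<^sup>2 * dehomog k" using k by (simp add: dehomog_mult dehomog_power)
  hence "dehomog x \<noteq> 0" "dehomog k \<noteq> 0" using sf by auto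
  have "is_unit (dehomog x)" using pk sf squarefreeD by (metis dvd_triv_left)
  hence "degree (dehomog x) = 0" using \<open>dehomog x \<noteq> 0\<close> is_unit_iff_degree by blast
  hence "degree (dehomog k) = n" using pk deg \<open>dehomog k \<noteq> 0\<close> \<open>dehomog x \<noteq> 0\<close>
    by (simp add: degree_mult_eq degree_power_eq)
  moreover have "degree (dehomog k) \<le> degree k" unfolding dehomog_def by (rule map_poly_degree_leq)
  moreover have "degree f = 2 * degree x + degree k"
    using k \<open>x \<noteq> 0\<close> \<open>k \<noteq> 0\<close> by (simp add: degree_mult_eq degree_power_eq)
  ultimately have "degree x = 0" and deg_f: "degree f = n" using degree_form_le[OF f] by linarith+
  then obtain x0 where x: "x = [:x0:]" by (metis degree_eq_zeroE)
  obtain c where c: "coeff f n = [:c:]" using form_coeff_eq_monom[OF f, of n] by (auto simp: monom_0)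
  have "c \<noteq> 0" using \<open>f \<noteq> 0\<close> deg_f c by (metis leading_coeff_0_iff pCons_0_0)
  moreover have "coeff f n = x0\<^sup>2 * coeff k n" using k x by (simp add: power2_eq_square)
  ultimately have "x0 dvd [:c:]" using c by (metis dvd_triv_left power2_eq_square mult.assoc)
  hence "is_unit x0" using \<open>c \<noteq> 0\<close> by (metis dvd_unit_imp_unit is_unit_const_poly_iff is_unit_iff_degree
      degree_pCons_0 pCons_eq_0_iff)
  thus "is_unit x" by (simp add: x is_unit_const_poly_iff)
qed

lemma squarefree_form_iff:
  assumes "is_form (2 * d) f" and "even (degree (dehomog f))"
  shows "squarefree f \<longleftrightarrow> squarefree (dehomog f) \<and> degree (dehomog f) = 2 * d"
  using assms squarefree_dehomog degree_dehomog_eq_if_squarefree squarefree_form_if_dehomog by blast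

lemma form_dvd_iff_dehomog_dvd:
  assumes q: "is_form m q" "degree (dehomog q) = m" and f: "is_form n f"
  shows "q dvd f \<longleftrightarrow> dehomog q dvd dehomog f"
proof
  assume "dehomog q dvd dehomog f"
  then obtain k where k: "dehomog f = dehomog q * k" by blast
  show "q dvd f"
  proof (cases "f = 0")
    case False
    hence "dehomog q \<noteq> 0" "k \<noteq> 0" using k dehomog_eq_0_iff[OF f] by auto
    hence deg: "m + degree k \<le> n" using k q(2) degree_dehomog_le[OF f] by (simp add: degree_mult_eq)
    have "f = homog (m + (n - m)) (dehomog q * k)" using homog_dehomog[OF f] k deg by simp
    also have "\<dots> = homog m (dehomog q) * homog (n - m) k"
      using deg q(2) by (intro homog_mult) auto
    also have "\<dots> = q * homog (n - m) k" using homog_dehomog[OF q(1)] by simp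
    finally show ?thesis by simp
  qed simp
qed (rule dehomog_dvd)

context pos_quadratic
begin

lemma even_degree_qnorm: "even (degree (qnorm Q w))"
  using degree_qnorm[of "fst w" "snd w"] by (simp add: max_def)

lemma degree_le_if_qreps:
  assumes "(a, b) \<in> qreps Q p" and "degree p \<le> 2 * d"
  shows "degree a \<le> d - 1" and "degree b \<le> d" and "a \<noteq> 0 \<Longrightarrow> d \<ge> 1"
  using assms degree_qnorm[of a b] by (auto simp: qreps_def split: if_splits)

lemma form_reps_eq_image:
  assumes q: "is_form 2 q" "dehomog q = Q" and f: "is_form (2 * d) f"
  shows "{(\<xi>, \<eta>). is_form (d - 1) \<xi> \<and> is_form d \<eta> \<and> f = \<eta>\<^sup>2 + q * \<xi>\<^sup>2}
    = (\<lambda>(a, b). (homog (d - 1) a, homog d b)) ` qreps Q (dehomog f)"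
proof (intro equalityI subsetI)
  fix z assume "z \<in> {(\<xi>, \<eta>). is_form (d - 1) \<xi> \<and> is_form d \<eta> \<and> f = \<eta>\<^sup>2 + q * \<xi>\<^sup>2}"
  then obtain \<xi> \<eta> where z: "z = (\<xi>, \<eta>)" and forms: "is_form (d - 1) \<xi>" "is_form d \<eta>"
    and "f = \<eta>\<^sup>2 + q * \<xi>\<^sup>2" by blast
  hence "(dehomog \<xi>, dehomog \<eta>) \<in> qreps Q (dehomog f)"
    using q by (simp add: qreps_def qnorm_def dehomog_add dehomog_mult dehomog_power)
  moreover have "z = (homog (d - 1) (dehomog \<xi>), homog d (dehomog \<eta>))"
    using z forms by (simp add: homog_dehomog)
  ultimately show "z \<in> (\<lambda>(a, b). (homog (d - 1) a, homog d b)) ` qreps Q (dehomog f)" by force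
next
  fix z assume "z \<in> (\<lambda>(a, b). (homog (d - 1) a, homog d b)) ` qreps Q (dehomog f)"
  then obtain a b where ab: "(a, b) \<in> qreps Q (dehomog f)" and z: "z = (homog (d - 1) a, homog d b)"
    by auto
  note deg = degree_le_if_qreps[OF ab degree_dehomog_le[OF f]]
  have "homog (2 * d) (b * b) = homog d b * homog d b"
    using homog_mult[OF deg(2) deg(2)] by (simp add: mult_2)
  moreover have "homog (2 * d) (Q * (a * a)) = q * (homog (d - 1) a * homog (d - 1) a)"
  proof (cases "a = 0")
    case False
    hence "2 * d = 2 + ((d - 1) + (d - 1))" using deg(3) by simp
    hence "homog (2 * d) (Q * (a * a)) = homog (2 + ((d - 1) + (d - 1))) (Q * (a * a))"
      by (rule arg_cong)
    also have "\<dots> = homog 2 Q * homog ((d - 1) + (d - 1)) (a * a)"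
      using deg(1) degree_eq_2 degree_mult_le[of a a] by (intro homog_mult) auto
    also have "homog ((d - 1) + (d - 1)) (a * a) = homog (d - 1) a * homog (d - 1) a"
      using deg(1) by (intro homog_mult) auto
    finally show ?thesis using homog_dehomog[OF q(1)] q(2) by simp
  qed (simp add: homog_0)
  moreover have "f = homog (2 * d) (b * b + Q * (a * a))"
    using ab homog_dehomog[OF f] by (simp add: qreps_def qnorm_def power2_eq_square)
  ultimately have "f = (homog d b)\<^sup>2 + q * (homog (d - 1) a)\<^sup>2"
    by (simp add: homog_add power2_eq_square)
  thus "z \<in> {(\<xi>, \<eta>). is_form (d - 1) \<xi> \<and> is_form d \<eta> \<and> f = \<eta>\<^sup>2 + q * \<xi>\<^sup>2}"
    using z by (simp add: is_form_homog)
qed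

lemma inj_on_homog_qreps:
  assumes "degree p \<le> 2 * d"
  shows "inj_on (\<lambda>(a, b). (homog (d - 1) a, homog d b)) (qreps Q p)"
proof (rule inj_onI)
  fix w w' assume w: "w \<in> qreps Q p" and w': "w' \<in> qreps Q p"
    and eq: "(\<lambda>(a, b). (homog (d - 1) a, homog d b)) w = (\<lambda>(a, b). (homog (d - 1) a, homog d b)) w'"
  obtain a b a' b' where ab: "w = (a, b)" "w' = (a', b')" by fastforce
  have "dehomog (homog (d - 1) a) = dehomog (homog (d - 1) a')"
    and "dehomog (homog d b) = dehomog (homog d b')" using eq by (simp_all add: ab)
  thus "w = w'" using degree_le_if_qreps[OF _ assms] w w' by (simp add: ab dehomog_homog)
qed

end

lemma le_two_power_half_eq_iff:
  fixes c e d :: nat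
  assumes "c \<le> 2 ^ (e div 2 + 1)" and "e \<le> 2 * d" and "even e"
  shows "c \<le> 2 ^ (d + 1)" and "c = 2 ^ (d + 1) \<longleftrightarrow> c = 2 ^ (e div 2 + 1) \<and> e = 2 * d"
proof -
  have "e div 2 \<le> d" using assms(2) by simp
  hence le: "(2::nat) ^ (e div 2 + 1) \<le> 2 ^ (d + 1)" by simp
  thus "c \<le> 2 ^ (d + 1)" using assms(1) by linarith
  show "c = 2 ^ (d + 1) \<longleftrightarrow> c = 2 ^ (e div 2 + 1) \<and> e = 2 * d"
  proof (cases "e = 2 * d")
    case False
    hence "e div 2 + 1 \<le> d" using assms(2,3) by (auto elim!: evenE)
    hence "(2::nat) ^ (e div 2 + 1) < 2 ^ (d + 1)" by simp
    thus ?thesis using assms(1) False by linarith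
  qed simp
qed

theorem corollary1p2:
  fixes q f :: bipoly and d :: nat
  assumes "is_form 2 q" and "pos_def2 q"
    and "is_form (2 * d) f" and "psd2 f"
  shows "(\<exists>\<xi> \<eta>. is_form (d - 1) \<xi> \<and> is_form d \<eta> \<and> f = \<eta>\<^sup>2 + q * \<xi>\<^sup>2)
    \<and> finite {(\<xi>, \<eta>). is_form (d - 1) \<xi> \<and> is_form d \<eta> \<and> f = \<eta>\<^sup>2 + q * \<xi>\<^sup>2}
    \<and> card {(\<xi>, \<eta>). is_form (d - 1) \<xi> \<and> is_form d \<eta> \<and> f = \<eta>\<^sup>2 + q * \<xi>\<^sup>2} \<le> 2 ^ (d + 1)
    \<and> (card {(\<xi>, \<eta>). is_form (d - 1) \<xi> \<and> is_form d \<eta> \<and> f = \<eta>\<^sup>2 + q * \<xi>\<^sup>2} = 2 ^ (d + 1)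
        \<longleftrightarrow> (\<not> q dvd f \<and> squarefree f))"
proof -
  define Q p where "Q = dehomog q" and "p = dehomog f"
  interpret pos_quadratic Q unfolding Q_def by (rule pos_quadratic_dehomog[OF assms(1,2)])
  let ?T = "{(\<xi>, \<eta>). is_form (d - 1) \<xi> \<and> is_form d \<eta> \<and> f = \<eta>\<^sup>2 + q * \<xi>\<^sup>2}"
  have nonneg: "poly p t \<ge> 0" for t using assms(4) by (simp add: p_def poly_dehomog psd2_def)
  have nonempty: "qreps Q p \<noteq> {}" and law: "qreps_card_law Q p"
    using qreps_nonempty[OF nonneg] qreps_card_law[OF nonneg] by blast+
  obtain w where "qnorm Q w = p" using nonempty by (auto simp: qreps_def)
  hence deg: "degree p \<le> 2 * d" "even (degree p)"
    using degree_dehomog_le[OF assms(3)] even_degree_qnorm[of w] by (simp_all add: p_def)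
  have T: "?T = (\<lambda>(a, b). (homog (d - 1) a, homog d b)) ` qreps Q p"
    using form_reps_eq_image[OF assms(1) Q_def[symmetric] assms(3)] by (simp add: p_def)
  hence exists: "\<exists>\<xi> \<eta>. is_form (d - 1) \<xi> \<and> is_form d \<eta> \<and> f = \<eta>\<^sup>2 + q * \<xi>\<^sup>2"
    using nonempty by blast
  have card_T: "card ?T = card (qreps Q p)" and finite_T: "finite ?T \<longleftrightarrow> finite (qreps Q p)"
    unfolding T using inj_on_homog_qreps[OF deg(1)] by (simp_all add: card_image finite_image_iff)
  have squarefree_f: "squarefree f \<longleftrightarrow> squarefree p \<and> degree p = 2 * d"
    using squarefree_form_iff[OF assms(3)] deg by (simp add: p_def)
  have dvd_f: "q dvd f \<longleftrightarrow> Q dvd p"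
    using form_dvd_iff_dehomog_dvd[OF assms(1) _ assms(3)] degree_eq_2 by (simp add: Q_def p_def)
  show ?thesis
    using exists law card_T finite_T squarefree_f dvd_f
      le_two_power_half_eq_iff[OF _ deg, of "card ?T"]
    unfolding qreps_card_law_def by auto
qed

end
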